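(* Let $N,d\ge1$, $\lambda,\tau>0$, and let $\psi:[0,\infty)\to(0,\infty)$ be positive, nonincreasing, differentiable with $\psi(r)\le1$ for all $r\ge0$. Let $(x_i,v_i)_{i=1}^N$ solve $$\dot x_i(t)=v_i(t),\qquad \dot v_i(t)=\frac{\lambda}{N}\sum_{j=1}^N\psi(|x_i(t-\tau)-x_j(t-\tau)|)\,(v_j(t-\tau)-v_i(t-\tau)),\qquad t>0,$$ with initial data $(x_i,v_i)=(x_i^0,v_i^0)$ on $[-\tau,0]$, $(x_i^0,v_i^0)\in C([-\tau,0];\mathbb{R}^{2d})\cap C^1((-\tau,0);\mathbb{R}^{2d})$. Then for any $\delta>0$, $$\frac{d}{dt}V(t)\le 2(\delta-1)\lambda\widetilde D(t)+\frac{2\tau\lambda^3}{\delta}\int_{t-\tau}^t\widetilde D(s)\,ds\qquad\text{for all } t>\tau.$$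
   Context: $V(t):=\frac12\sum_{i,j=1}^N|v_i(t)-v_j(t)|^2$, $D(t):=\frac12\sum_{i,j=1}^N\psi(|x_i(t)-x_j(t)|)\,|v_j(t)-v_i(t)|^2$, and $\widetilde D(t):=D(t-\tau)$. *)

theory Defs
  imports "HOL-Analysis.Analysis"
begin

definition Vfun :: "nat \<Rightarrow> (nat \<Rightarrow> real \<Rightarrow> 'a::euclidean_space) \<Rightarrow> real \<Rightarrow> real" where
  "Vfun N v t = (1/2) * (\<Sum>i\<in>{1..N}. \<Sum>j\<in>{1..N}. (norm (v i t - v j t))\<^sup>2)"

definition Dfun :: "nat \<Rightarrow> (real \<Rightarrow> real) \<Rightarrow> (nat \<Rightarrow> real \<Rightarrow> 'a::euclidean_space)
    \<Rightarrow> (nat \<Rightarrow> real \<Rightarrow> 'a) \<Rightarrow> real \<Rightarrow> real" where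
  "Dfun N \<psi> x v t = (1/2) * (\<Sum>i\<in>{1..N}. \<Sum>j\<in>{1..N}.
      \<psi> (norm (x i t - x j t)) * (norm (v j t - v i t))\<^sup>2)"

end

theory Submission
  imports Defs
begin

text \<open>Write \<open>F\<^sub>i(s)\<close> for the undelayed alignment force, so that
\<open>v\<^sub>i'(t) = F\<^sub>i(t - \<tau>)\<close>. By antisymmetry of the interaction \<open>\<Sum>\<^sub>i F\<^sub>i = 0\<close>, hence
\<open>V'(t) = 2N \<Sum>\<^sub>i \<langle>v\<^sub>i(t), F\<^sub>i(t - \<tau>)\<rangle>\<close>. Splitting \<open>v\<^sub>i(t) = v\<^sub>i(t - \<tau>) + (v\<^sub>i(t) - v\<^sub>i(t - \<tau>))\<close>,
the first part contributes exactly \<open>-2\<lambda> D(t - \<tau>)\<close>, again by symmetry. The increment is the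
integral of \<open>F\<^sub>i(s - \<tau>)\<close> over \<open>[t - \<tau>, t]\<close>; pairing it with \<open>F\<^sub>i(t - \<tau>)\<close> and applying Young's
inequality with weight \<open>\<delta> / (\<lambda> \<tau>)\<close> together with \<open>\<Sum>\<^sub>i |F\<^sub>i|\<^sup>2 \<le> (2\<lambda>\<^sup>2 / N) D\<close>
(Cauchy-Schwarz and \<open>\<psi> \<le> 1\<close>) gives the two remaining terms.\<close>

lemma sum_sum_scaleR_diff_eq_0_if_symmetric:
  fixes w :: "'b \<Rightarrow> 'a::real_vector"
  assumes sym: "\<And>i j. p i j = p j i"
  shows "(\<Sum>i\<in>I. \<Sum>j\<in>I. p i j *\<^sub>R (w j - w i)) = 0"
proof -
  have "(\<Sum>i\<in>I. \<Sum>j\<in>I. p i j *\<^sub>R w j) = (\<Sum>j\<in>I. \<Sum>i\<in>I. p i j *\<^sub>R w j)"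
    by (rule sum.swap)
  also have "\<dots> = (\<Sum>i\<in>I. \<Sum>j\<in>I. p i j *\<^sub>R w i)"
    by (intro sum.cong refl) (metis sym)
  finally show ?thesis by (simp add: scaleR_diff_right sum_subtractf)
qed

lemma sum_sum_inner_diff_if_symmetric:
  fixes w :: "'b \<Rightarrow> 'a::real_inner"
  assumes sym: "\<And>i j. p i j = p j i"
  shows "(\<Sum>i\<in>I. \<Sum>j\<in>I. p i j * inner (w i) (w j - w i))
       = -(1/2) * (\<Sum>i\<in>I. \<Sum>j\<in>I. p i j * (norm (w j - w i))\<^sup>2)"
proof -
  let ?S = "\<Sum>i\<in>I. \<Sum>j\<in>I. p i j * inner (w i) (w j - w i)"
  have "?S = (\<Sum>j\<in>I. \<Sum>i\<in>I. p i j * inner (w i) (w j - w i))"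
    by (rule sum.swap)
  also have "\<dots> = (\<Sum>i\<in>I. \<Sum>j\<in>I. p i j * inner (w j) (w i - w j))"
    by (intro sum.cong refl) (metis sym)
  finally have "?S + ?S = (\<Sum>i\<in>I. \<Sum>j\<in>I. p i j * (inner (w i) (w j - w i) + inner (w j) (w i - w j)))"
    by (simp add: sum.distrib distrib_left)
  also have "\<dots> = (\<Sum>i\<in>I. \<Sum>j\<in>I. - (p i j * (norm (w j - w i))\<^sup>2))"
    by (intro sum.cong refl)
       (simp add: power2_norm_eq_inner inner_diff_left inner_diff_right inner_commute algebra_simps)
  finally show ?thesis by (simp add: sum_negf)
qed

lemma sum_sum_inner_diff_diff:
  fixes a b :: "'b \<Rightarrow> 'a::real_inner"
  shows "(\<Sum>i\<in>I. \<Sum>j\<in>I. inner (a i - a j) (b i - b j))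
     = 2 * card I * (\<Sum>i\<in>I. inner (a i) (b i)) - 2 * inner (sum a I) (sum b I)"
proof -
  have expand: "inner (a i - a j) (b i - b j)
      = inner (a i) (b i) + inner (a j) (b j) - inner (a i) (b j) - inner (a j) (b i)" for i j
    by (simp add: inner_diff_left inner_diff_right algebra_simps)
  have "(\<Sum>i\<in>I. \<Sum>j\<in>I. inner (a i) (b j)) = inner (sum a I) (sum b I)"
    by (simp add: inner_sum_left inner_sum_right) (rule sum.swap)
  moreover have "(\<Sum>i\<in>I. \<Sum>j\<in>I. inner (a j) (b i)) = inner (sum a I) (sum b I)"
    by (simp add: inner_sum_left inner_sum_right)
  ultimately show ?thesis
    unfolding expand by (simp add: sum_subtractf sum.distrib sum_distrib_left mult.assoc)
qed

lemma power2_norm_sum_scaleR_le: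
  fixes u :: "'b \<Rightarrow> 'a::real_normed_vector"
  assumes p: "\<And>j. j \<in> I \<Longrightarrow> 0 \<le> p j \<and> p j \<le> 1"
  shows "(norm (\<Sum>j\<in>I. p j *\<^sub>R u j))\<^sup>2 \<le> card I * (\<Sum>j\<in>I. p j * (norm (u j))\<^sup>2)"
proof -
  have "norm (\<Sum>j\<in>I. p j *\<^sub>R u j) \<le> (\<Sum>j\<in>I. norm (p j *\<^sub>R u j))"
    by (rule norm_sum)
  also have "\<dots> = (\<Sum>j\<in>I. p j * norm (u j))"
    by (intro sum.cong refl) (use p in auto)
  finally have "(norm (\<Sum>j\<in>I. p j *\<^sub>R u j))\<^sup>2 \<le> (\<Sum>j\<in>I. p j * norm (u j))\<^sup>2"
    by (rule power_mono) simp
  also have "\<dots> \<le> (\<Sum>j\<in>I. (p j * norm (u j))\<^sup>2) * card I"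
    by (rule sum_squared_le_sum_of_squares)
  also have "\<dots> \<le> (\<Sum>j\<in>I. p j * (norm (u j))\<^sup>2) * card I"
  proof (intro mult_right_mono sum_mono)
    fix j assume "j \<in> I"
    then have "(p j)\<^sup>2 \<le> p j" using p by (simp add: power2_eq_square mult_left_le)
    then show "(p j * norm (u j))\<^sup>2 \<le> p j * (norm (u j))\<^sup>2"
      by (simp add: power_mult_distrib mult_right_mono)
  qed simp
  finally show ?thesis by (simp add: mult.commute)
qed

lemma inner_le_weighted_power2_norms:
  fixes a b :: "'a::real_inner"
  assumes "e > 0"
  shows "inner a b \<le> e / 2 * (norm b)\<^sup>2 + 1 / (2 * e) * (norm a)\<^sup>2"
proof -
  have "0 \<le> (norm (e *\<^sub>R b - a))\<^sup>2" by simp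
  then have "2 * e * inner a b \<le> e * e * (norm b)\<^sup>2 + (norm a)\<^sup>2"
    by (simp add: power2_norm_eq_inner inner_diff_left inner_diff_right inner_commute algebra_simps)
  then show ?thesis using assms by (simp add: field_simps power2_eq_square)
qed

lemma has_real_derivative_Vfun:
  fixes v :: "nat \<Rightarrow> real \<Rightarrow> 'a::euclidean_space"
  assumes "\<And>i. i \<in> {1..N} \<Longrightarrow> (v i has_vector_derivative v' i) (at t)"
  shows "(Vfun N v has_real_derivative
      2 * real N * (\<Sum>i\<in>{1..N}. inner (v i t) (v' i))
      - 2 * inner (\<Sum>i\<in>{1..N}. v i t) (\<Sum>i\<in>{1..N}. v' i)) (at t)"
proof -
  have "((\<lambda>s. inner (v i s - v j s) (v i s - v j s)) has_real_derivative
      2 * inner (v i t - v j t) (v' i - v' j)) (at t)" if "i \<in> {1..N}" "j \<in> {1..N}" for i j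
    using assms[OF that(1)] assms[OF that(2)]
    unfolding has_field_derivative_def has_vector_derivative_def
    by (auto intro!: derivative_eq_intros simp: inner_commute algebra_simps)
  then have "((\<lambda>s. (1/2) * (\<Sum>i\<in>{1..N}. \<Sum>j\<in>{1..N}. inner (v i s - v j s) (v i s - v j s)))
      has_real_derivative (1/2) * (\<Sum>i\<in>{1..N}. \<Sum>j\<in>{1..N}. 2 * inner (v i t - v j t) (v' i - v' j))) (at t)"
    by (intro DERIV_cmult DERIV_sum) auto
  moreover have "Vfun N v
      = (\<lambda>s. (1/2) * (\<Sum>i\<in>{1..N}. \<Sum>j\<in>{1..N}. inner (v i s - v j s) (v i s - v j s)))"
    by (simp add: fun_eq_iff Vfun_def power2_norm_eq_inner)
  moreover have "(1/2) * (\<Sum>i\<in>{1..N}. \<Sum>j\<in>{1..N}. 2 * inner (v i t - v j t) (v' i - v' j))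
      = 2 * real N * (\<Sum>i\<in>{1..N}. inner (v i t) (v' i))
        - 2 * inner (\<Sum>i\<in>{1..N}. v i t) (\<Sum>i\<in>{1..N}. v' i)"
    by (simp add: sum_distrib_left[symmetric] sum_sum_inner_diff_diff)
  ultimately show ?thesis
    by metis
qed

lemma continuous_on_Dfun:
  assumes "continuous_on {0..} \<psi>"
    and "\<And>i. i \<in> {1..N} \<Longrightarrow> continuous_on S (x i)"
    and "\<And>i. i \<in> {1..N} \<Longrightarrow> continuous_on S (v i)"
  shows "continuous_on S (Dfun N \<psi> x v)"
proof -
  have "continuous_on S (\<lambda>s. \<psi> (norm (x i s - x j s)))" if "i \<in> {1..N}" "j \<in> {1..N}" for i j
    by (rule continuous_on_compose2[OF assms(1)]) (auto intro!: continuous_intros assms(2) that)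
  then show ?thesis
    unfolding Dfun_def by (intro continuous_intros assms(3)) auto
qed

lemma sum_inner_increment_le:
  fixes u :: "'b \<Rightarrow> real \<Rightarrow> 'a::real_inner"
  assumes "a \<le> b" "e > 0"
    and deriv: "\<And>i s. i \<in> I \<Longrightarrow> s \<in> {a..b} \<Longrightarrow> (u i has_vector_derivative u' i s) (at s within {a..b})"
    and g: "g integrable_on {a..b}" "\<And>s. s \<in> {a..b} \<Longrightarrow> (\<Sum>i\<in>I. (norm (u' i s))\<^sup>2) \<le> g s"
  shows "(\<Sum>i\<in>I. inner (u i b - u i a) (w i))
    \<le> e / 2 * (b - a) * (\<Sum>i\<in>I. (norm (w i))\<^sup>2) + 1 / (2 * e) * integral {a..b} g"
proof -
  let ?W = "\<Sum>i\<in>I. (norm (w i))\<^sup>2"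
  have "((\<lambda>s. \<Sum>i\<in>I. inner (u' i s) (w i)) has_integral
      (\<Sum>i\<in>I. inner (u i b) (w i)) - (\<Sum>i\<in>I. inner (u i a) (w i))) {a..b}"
  proof (rule fundamental_theorem_of_calculus[OF \<open>a \<le> b\<close>])
    fix s assume "s \<in> {a..b}"
    then show "((\<lambda>s. \<Sum>i\<in>I. inner (u i s) (w i)) has_vector_derivative
        (\<Sum>i\<in>I. inner (u' i s) (w i))) (at s within {a..b})"
      using deriv unfolding has_vector_derivative_def
      by (auto intro!: derivative_eq_intros simp: inner_scaleR_left sum_distrib_left)
  qed
  moreover have "((\<lambda>s. e / 2 * ?W + 1 / (2 * e) * g s) has_integral
      (b - a) * (e / 2 * ?W) + 1 / (2 * e) * integral {a..b} g) {a..b}"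
  proof (rule has_integral_add)
    show "((\<lambda>s. e / 2 * ?W) has_integral (b - a) * (e / 2 * ?W)) {a..b}"
      using has_integral_const_real[of "e / 2 * ?W" a b] \<open>a \<le> b\<close> by simp
    show "((\<lambda>s. 1 / (2 * e) * g s) has_integral 1 / (2 * e) * integral {a..b} g) {a..b}"
      by (rule has_integral_mult_right[OF integrable_integral[OF g(1)]])
  qed
  moreover have "(\<Sum>i\<in>I. inner (u' i s) (w i))
      \<le> e / 2 * ?W + 1 / (2 * e) * g s" if "s \<in> {a..b}" for s
  proof -
    have "(\<Sum>i\<in>I. inner (u' i s) (w i))
        \<le> (\<Sum>i\<in>I. e / 2 * (norm (w i))\<^sup>2 + 1 / (2 * e) * (norm (u' i s))\<^sup>2)"
      by (intro sum_mono inner_le_weighted_power2_norms \<open>e > 0\<close>)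
    also have "\<dots> = e / 2 * ?W + 1 / (2 * e) * (\<Sum>i\<in>I. (norm (u' i s))\<^sup>2)"
      by (simp add: sum.distrib sum_distrib_left)
    also have "\<dots> \<le> e / 2 * ?W + 1 / (2 * e) * g s"
      using g(2)[OF that] \<open>e > 0\<close> by (simp add: divide_right_mono)
    finally show ?thesis .
  qed
  ultimately have "(\<Sum>i\<in>I. inner (u i b) (w i)) - (\<Sum>i\<in>I. inner (u i a) (w i))
      \<le> (b - a) * (e / 2 * ?W) + 1 / (2 * e) * integral {a..b} g"
    by (rule has_integral_le)
  then show ?thesis
    by (simp add: inner_diff_left sum_subtractf algebra_simps)
qed

definition alignment_force ::
    "nat \<Rightarrow> real \<Rightarrow> (real \<Rightarrow> real) \<Rightarrow> (nat \<Rightarrow> real \<Rightarrow> 'a::real_normed_vector)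
      \<Rightarrow> (nat \<Rightarrow> real \<Rightarrow> 'a) \<Rightarrow> nat \<Rightarrow> real \<Rightarrow> 'a" where
  "alignment_force N lam \<psi> x v i s = (lam / real N) *\<^sub>R
      (\<Sum>j\<in>{1..N}. \<psi> (norm (x i s - x j s)) *\<^sub>R (v j s - v i s))"

lemma sum_alignment_force_eq_0:
  "(\<Sum>i\<in>{1..N}. alignment_force N lam \<psi> x v i s) = 0"
  unfolding alignment_force_def scaleR_sum_right[symmetric]
  by (simp add: sum_sum_scaleR_diff_eq_0_if_symmetric norm_minus_commute)

lemma has_real_derivative_Vfun_alignment_force:
  fixes x v :: "nat \<Rightarrow> real \<Rightarrow> 'a::euclidean_space"
  assumes "\<And>i. i \<in> {1..N} \<Longrightarrow> (v i has_vector_derivative alignment_force N lam \<psi> x v i s) (at t)"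
  shows "(Vfun N v has_real_derivative
      2 * real N * (\<Sum>i\<in>{1..N}. inner (v i t) (alignment_force N lam \<psi> x v i s))) (at t)"
proof -
  have "(Vfun N v has_real_derivative
      2 * real N * (\<Sum>i\<in>{1..N}. inner (v i t) (alignment_force N lam \<psi> x v i s))
      - 2 * inner (\<Sum>i\<in>{1..N}. v i t) (\<Sum>i\<in>{1..N}. alignment_force N lam \<psi> x v i s)) (at t)"
    by (rule has_real_derivative_Vfun) (rule assms)
  then show ?thesis
    unfolding sum_alignment_force_eq_0 by simp
qed

lemma sum_inner_alignment_force:
  fixes x v :: "nat \<Rightarrow> real \<Rightarrow> 'a::euclidean_space"
  shows "(\<Sum>i\<in>{1..N}. inner (v i s) (alignment_force N lam \<psi> x v i s))
    = - (lam / real N) * Dfun N \<psi> x v s"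
proof -
  have "(\<Sum>i\<in>{1..N}. inner (v i s) (alignment_force N lam \<psi> x v i s))
      = (lam / real N) * (\<Sum>i\<in>{1..N}. \<Sum>j\<in>{1..N}.
          \<psi> (norm (x i s - x j s)) * inner (v i s) (v j s - v i s))"
    by (simp add: alignment_force_def inner_sum_right sum_distrib_left)
  then show ?thesis
    by (simp add: sum_sum_inner_diff_if_symmetric norm_minus_commute Dfun_def)
qed

lemma sum_power2_norm_alignment_force_le:
  fixes x v :: "nat \<Rightarrow> real \<Rightarrow> 'a::euclidean_space"
  assumes "\<And>r. r \<ge> 0 \<Longrightarrow> 0 \<le> \<psi> r \<and> \<psi> r \<le> 1"
  shows "(\<Sum>i\<in>{1..N}. (norm (alignment_force N lam \<psi> x v i s))\<^sup>2)
    \<le> 2 * lam\<^sup>2 / real N * Dfun N \<psi> x v s"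
proof -
  let ?p = "\<lambda>i j. \<psi> (norm (x i s - x j s))"
  have "(norm (alignment_force N lam \<psi> x v i s))\<^sup>2
      = (lam / real N)\<^sup>2 * (norm (\<Sum>j\<in>{1..N}. ?p i j *\<^sub>R (v j s - v i s)))\<^sup>2" for i
    by (simp add: alignment_force_def power_mult_distrib power_divide)
  also have "\<dots> i \<le> (lam / real N)\<^sup>2 * (real N * (\<Sum>j\<in>{1..N}. ?p i j * (norm (v j s - v i s))\<^sup>2))" for i
    using power2_norm_sum_scaleR_le[of "{1..N}" "?p i" "\<lambda>j. v j s - v i s"] assms
    by (intro mult_left_mono) auto
  finally have "(\<Sum>i\<in>{1..N}. (norm (alignment_force N lam \<psi> x v i s))\<^sup>2)
      \<le> (\<Sum>i\<in>{1..N}. (lam / real N)\<^sup>2 * (real N * (\<Sum>j\<in>{1..N}. ?p i j * (norm (v j s - v i s))\<^sup>2)))"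
    by (rule sum_mono)
  also have "\<dots> = 2 * lam\<^sup>2 / real N * Dfun N \<psi> x v s"
    by (cases "N = 0") (simp_all add: Dfun_def sum_distrib_left power2_eq_square)
  finally show ?thesis .
qed

lemma sum_inner_delayed_increment_le:
  fixes x v :: "nat \<Rightarrow> real \<Rightarrow> 'a::euclidean_space"
  assumes "0 < \<tau>" "\<tau> < t" "e > 0"
    and psi: "\<And>r. r \<ge> 0 \<Longrightarrow> 0 \<le> \<psi> r \<and> \<psi> r \<le> 1"
    and integrable: "(\<lambda>s. Dfun N \<psi> x v (s - \<tau>)) integrable_on {t - \<tau>..t}"
    and v_deriv: "\<And>i s. i \<in> {1..N} \<Longrightarrow> s > 0 \<Longrightarrow>
      (v i has_vector_derivative alignment_force N lam \<psi> x v i (s - \<tau>)) (at s)"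
  shows "(\<Sum>i\<in>{1..N}. inner (v i t - v i (t - \<tau>)) (alignment_force N lam \<psi> x v i (t - \<tau>)))
    \<le> e * \<tau> * lam\<^sup>2 / real N * Dfun N \<psi> x v (t - \<tau>)
      + lam\<^sup>2 / (e * real N) * integral {t - \<tau>..t} (\<lambda>s. Dfun N \<psi> x v (s - \<tau>))"
proof -
  let ?F = "alignment_force N lam \<psi> x v"
  let ?D = "Dfun N \<psi> x v"
  have F_bound: "(\<Sum>i\<in>{1..N}. (norm (?F i s))\<^sup>2) \<le> 2 * lam\<^sup>2 / real N * ?D s" for s
    using psi by (rule sum_power2_norm_alignment_force_le)
  have "(\<Sum>i\<in>{1..N}. inner (v i t - v i (t - \<tau>)) (?F i (t - \<tau>)))
      \<le> e / 2 * (t - (t - \<tau>)) * (\<Sum>i\<in>{1..N}. (norm (?F i (t - \<tau>)))\<^sup>2)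
        + 1 / (2 * e) * integral {t - \<tau>..t} (\<lambda>s. 2 * lam\<^sup>2 / real N * ?D (s - \<tau>))"
  proof (rule sum_inner_increment_le[where u' = "\<lambda>i s. ?F i (s - \<tau>)"])
    show "t - \<tau> \<le> t" using \<open>0 < \<tau>\<close> by simp
    show "(\<lambda>s. 2 * lam\<^sup>2 / real N * ?D (s - \<tau>)) integrable_on {t - \<tau>..t}"
      using integrable by (rule integrable_on_mult_right)
    fix i s assume "i \<in> {1..N}" "s \<in> {t - \<tau>..t}"
    then show "(v i has_vector_derivative ?F i (s - \<tau>)) (at s within {t - \<tau>..t})"
      using v_deriv \<open>\<tau> < t\<close> by (auto intro: has_vector_derivative_at_within)
  qed (use F_bound \<open>e > 0\<close> in auto)
  also have "\<dots> \<le> e / 2 * \<tau> * (2 * lam\<^sup>2 / real N * ?D (t - \<tau>))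
        + 1 / (2 * e) * integral {t - \<tau>..t} (\<lambda>s. 2 * lam\<^sup>2 / real N * ?D (s - \<tau>))"
    using mult_left_mono[OF F_bound, of "e / 2 * \<tau>"] \<open>e > 0\<close> \<open>0 < \<tau>\<close> by simp
  also have "\<dots> = e * \<tau> * lam\<^sup>2 / real N * ?D (t - \<tau>)
      + lam\<^sup>2 / (e * real N) * integral {t - \<tau>..t} (\<lambda>s. ?D (s - \<tau>))"
    by simp
  finally show ?thesis .
qed

theorem lemma3p1:
  fixes N :: nat and lam \<tau> \<delta> :: real and \<psi> :: "real \<Rightarrow> real"
    and x v :: "nat \<Rightarrow> real \<Rightarrow> 'a::euclidean_space"
  assumes N: "N \<ge> 1"
    and lam: "lam > 0" and tau: "\<tau> > 0"
    and psi_pos: "\<forall>r\<ge>0. \<psi> r > 0"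
    and psi_le1: "\<forall>r\<ge>0. \<psi> r \<le> 1"
    and psi_mono: "\<forall>r s. 0 \<le> r \<longrightarrow> r \<le> s \<longrightarrow> \<psi> s \<le> \<psi> r"
    and psi_diff: "\<forall>r\<ge>0. \<psi> differentiable (at r within {0..})"
    and cont_x: "\<forall>i\<in>{1..N}. continuous_on {-\<tau>..} (x i)"
    and cont_v: "\<forall>i\<in>{1..N}. continuous_on {-\<tau>..} (v i)"
    and init_C1: "\<forall>i\<in>{1..N}. \<exists>x' v'.
        (\<forall>s\<in>{-\<tau><..<0}. (x i has_vector_derivative x' s) (at s)
                         \<and> (v i has_vector_derivative v' s) (at s))
        \<and> continuous_on {-\<tau><..<0} x' \<and> continuous_on {-\<tau><..<0} v'"
    and ode_x: "\<forall>i\<in>{1..N}. \<forall>t>0. (x i has_vector_derivative v i t) (at t)"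
    and ode_v: "\<forall>i\<in>{1..N}. \<forall>t>0. (v i has_vector_derivative
        (lam / real N) *\<^sub>R (\<Sum>j\<in>{1..N}. \<psi> (norm (x i (t - \<tau>) - x j (t - \<tau>)))
            *\<^sub>R (v j (t - \<tau>) - v i (t - \<tau>)))) (at t)"
    and delta: "\<delta> > 0"
  shows "\<forall>t>\<tau>. \<exists>V'. (Vfun N v has_real_derivative V') (at t) \<and>
     V' \<le> 2 * (\<delta> - 1) * lam * Dfun N \<psi> x v (t - \<tau>)
          + (2 * \<tau> * lam ^ 3 / \<delta>) * integral {t - \<tau>..t} (\<lambda>s. Dfun N \<psi> x v (s - \<tau>))"
proof (intro allI impI)
  fix t assume "t > \<tau>"
  let ?F = "alignment_force N lam \<psi> x v"
  let ?D = "Dfun N \<psi> x v"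
  have v_deriv: "(v i has_vector_derivative ?F i (s - \<tau>)) (at s)" if "i \<in> {1..N}" "s > 0" for i s
    using ode_v that unfolding alignment_force_def by blast
  define V' where "V' = 2 * real N * (\<Sum>i\<in>{1..N}. inner (v i t) (?F i (t - \<tau>)))"
  have V_deriv: "(Vfun N v has_real_derivative V') (at t)"
    unfolding V'_def by (rule has_real_derivative_Vfun_alignment_force) (use v_deriv \<open>t > \<tau>\<close> tau in auto)
  have "continuous_on {0..} \<psi>"
    using psi_diff by (auto simp: continuous_on_eq_continuous_within
        intro: differentiable_imp_continuous_within)
  then have "continuous_on {-\<tau>..} ?D"
    using cont_x cont_v by (intro continuous_on_Dfun) auto
  then have "continuous_on {t - \<tau>..t} (\<lambda>s. ?D (s - \<tau>))"
    by (rule continuous_on_compose2) (use \<open>t > \<tau>\<close> in \<open>auto intro!: continuous_intros\<close>)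
  then have D_integrable: "(\<lambda>s. ?D (s - \<tau>)) integrable_on {t - \<tau>..t}"
    by (rule integrable_continuous_interval)
  define e where "e = \<delta> / (lam * \<tau>)"
  have "e > 0" using delta lam tau by (simp add: e_def)
  have "V' = 2 * real N * (\<Sum>i\<in>{1..N}. inner (v i (t - \<tau>)) (?F i (t - \<tau>)))
      + 2 * real N * (\<Sum>i\<in>{1..N}. inner (v i t - v i (t - \<tau>)) (?F i (t - \<tau>)))"
    by (simp add: V'_def inner_diff_left sum_subtractf algebra_simps)
  also have "\<dots> = - 2 * lam * ?D (t - \<tau>)
      + 2 * real N * (\<Sum>i\<in>{1..N}. inner (v i t - v i (t - \<tau>)) (?F i (t - \<tau>)))"
    unfolding sum_inner_alignment_force using N by simp
  also have "\<dots> \<le> - 2 * lam * ?D (t - \<tau>) + 2 * real N * (e * \<tau> * lam\<^sup>2 / real N * ?D (t - \<tau>)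
      + lam\<^sup>2 / (e * real N) * integral {t - \<tau>..t} (\<lambda>s. ?D (s - \<tau>)))"
    using sum_inner_delayed_increment_le[OF tau \<open>t > \<tau>\<close> \<open>e > 0\<close> _ D_integrable v_deriv]
      psi_pos psi_le1 by (simp add: less_imp_le mult_left_mono)
  also have "\<dots> = 2 * (\<delta> - 1) * lam * ?D (t - \<tau>)
      + (2 * \<tau> * lam ^ 3 / \<delta>) * integral {t - \<tau>..t} (\<lambda>s. ?D (s - \<tau>))"
    using N lam tau delta by (simp add: e_def field_simps power2_eq_square power3_eq_cube)
  finally show "\<exists>V'. (Vfun N v has_real_derivative V') (at t) \<and>
     V' \<le> 2 * (\<delta> - 1) * lam * ?D (t - \<tau>)
          + (2 * \<tau> * lam ^ 3 / \<delta>) * integral {t - \<tau>..t} (\<lambda>s. ?D (s - \<tau>))"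
    using V_deriv by blast
qed

end
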